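(* Let $\Gamma$ be a connected countably infinite graph, let $(B_n)_{n\in\mathbb N}$ satisfy $(\dagger)$, and let $M_1,M_2$ be maximum matchings. Then every component of the symmetric difference $M_1\oplus M_2$ is alternating with respect to $M_1$ and $M_2$, and is either a cycle of even length, a double ray, or a path of even length whose two end-vertices $u,v$ both lie in $B_n\setminus B_{n-1}$ for the same $n$ (with $B_0:=\emptyset$).
   Context: Condition $(\dagger)$ on $(B_n)_{n\in\mathbb N}$: each $B_n\subseteq V(\Gamma)$ is finite, $B_n\subseteq B_{n+1}$, $\bigcup_n B_n=V(\Gamma)$, and the subgraph induced on each $B_n$ is connected. A matching $M$ misses a vertex $x$ if no edge of $M$ contains $x$. The miss sequence of $M$ is $(m_n)_{n\in\mathbb N}$ with $m_n$ the number of vertices of $B_n$ missed by $M$. For matchings $M_1,M_2$ with miss sequences $(a_n),(b_n)$, write $M_1<M_2$ if there is $N$ with $a_n=b_n$ for all $n<N$ and $a_N>b_N$. A maximum matching is a matching $M$ for which no matching $M'$ satisfies $M<M'$. A path, cycle or double ray is alternating with respect to $M$ if every other edge of it lies in $M$. $S\oplus T=(S\cup T)\setminus(S\cap T)$. *)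

theory Defs
  imports Main "HOL-Library.Countable_Set"
begin

definition simple_graph :: "'a set \<Rightarrow> 'a set set \<Rightarrow> bool" where
  "simple_graph V E \<longleftrightarrow> (\<forall>e\<in>E. \<exists>x y. x \<noteq> y \<and> x \<in> V \<and> y \<in> V \<and> e = {x, y})"

definition induced_connected :: "'a set set \<Rightarrow> 'a set \<Rightarrow> bool" where
  "induced_connected E S \<longleftrightarrow>
     (\<forall>x\<in>S. \<forall>y\<in>S. (\<lambda>a b. {a, b} \<in> E \<and> a \<in> S \<and> b \<in> S)\<^sup>*\<^sup>* x y)"

text \<open>Condition (dagger); the sequence is indexed by nat starting at 0.\<close>
definition dagger :: "'a set \<Rightarrow> 'a set set \<Rightarrow> (nat \<Rightarrow> 'a set) \<Rightarrow> bool" where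
  "dagger V E B \<longleftrightarrow>
     (\<forall>n. finite (B n) \<and> B n \<subseteq> V \<and> B n \<subseteq> B (Suc n) \<and> induced_connected E (B n))
     \<and> (\<Union>n. B n) = V"

definition matching :: "'a set set \<Rightarrow> 'a set set \<Rightarrow> bool" where
  "matching E M \<longleftrightarrow> M \<subseteq> E \<and> (\<forall>e\<in>M. \<forall>f\<in>M. e \<noteq> f \<longrightarrow> e \<inter> f = {})"

definition misses :: "'a set set \<Rightarrow> 'a \<Rightarrow> bool" where
  "misses M x \<longleftrightarrow> (\<forall>e\<in>M. x \<notin> e)"

definition miss_seq :: "(nat \<Rightarrow> 'a set) \<Rightarrow> 'a set set \<Rightarrow> nat \<Rightarrow> nat" where
  "miss_seq B M n = card {x \<in> B n. misses M x}"

definition matching_less :: "(nat \<Rightarrow> 'a set) \<Rightarrow> 'a set set \<Rightarrow> 'a set set \<Rightarrow> bool" where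
  "matching_less B M1 M2 \<longleftrightarrow>
     (\<exists>N. (\<forall>n<N. miss_seq B M1 n = miss_seq B M2 n) \<and> miss_seq B M1 N > miss_seq B M2 N)"

definition maximum_matching :: "'a set set \<Rightarrow> (nat \<Rightarrow> 'a set) \<Rightarrow> 'a set set \<Rightarrow> bool" where
  "maximum_matching E B M \<longleftrightarrow> matching E M \<and> \<not> (\<exists>M'. matching E M' \<and> matching_less B M M')"

definition sym_diff :: "'a set \<Rightarrow> 'a set \<Rightarrow> 'a set" (infixl "\<oplus>" 65) where
  "S \<oplus> T = (S \<union> T) - (S \<inter> T)"

definition edge_components :: "'a set set \<Rightarrow> 'a set set set" where
  "edge_components D =
     {C. \<exists>x\<in>\<Union>D. C = {e\<in>D. \<exists>y\<in>e. (\<lambda>a b. {a, b} \<in> D)\<^sup>*\<^sup>* x y}}"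

definition walk_edges :: "'a list \<Rightarrow> 'a set set" where
  "walk_edges xs = {{xs ! i, xs ! Suc i} | i. Suc i < length xs}"

definition walk_alternating :: "'a set set \<Rightarrow> 'a list \<Rightarrow> bool" where
  "walk_alternating M xs \<longleftrightarrow>
     (\<forall>i. Suc (Suc i) < length xs \<longrightarrow>
        ({xs ! i, xs ! Suc i} \<in> M \<longleftrightarrow> {xs ! Suc i, xs ! Suc (Suc i)} \<notin> M))"

definition alt_even_cycle :: "'a set set \<Rightarrow> 'a set set \<Rightarrow> 'a set set \<Rightarrow> bool" where
  "alt_even_cycle M1 M2 C \<longleftrightarrow>
     (\<exists>xs. distinct xs \<and> length xs \<ge> 3 \<and> even (length xs) \<and>
        C = walk_edges (xs @ [xs ! 0]) \<and>
        walk_alternating M1 (xs @ [xs ! 0, xs ! 1]) \<and>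
        walk_alternating M2 (xs @ [xs ! 0, xs ! 1]))"

definition alt_double_ray :: "'a set set \<Rightarrow> 'a set set \<Rightarrow> 'a set set \<Rightarrow> bool" where
  "alt_double_ray M1 M2 C \<longleftrightarrow>
     (\<exists>f :: int \<Rightarrow> 'a. inj f \<and> C = range (\<lambda>i. {f i, f (i + 1)}) \<and>
        (\<forall>i. {f i, f (i + 1)} \<in> M1 \<longleftrightarrow> {f (i + 1), f (i + 2)} \<notin> M1) \<and>
        (\<forall>i. {f i, f (i + 1)} \<in> M2 \<longleftrightarrow> {f (i + 1), f (i + 2)} \<notin> M2))"

text \<open>C is the edge set of a path of even length alternating w.r.t. M1 and M2 whose
  end-vertices u, v lie in B n - B (n-1) for the same n (with B (-1) = {}; here B is
  indexed from 0).\<close>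
definition alt_even_path_same_layer ::
  "(nat \<Rightarrow> 'a set) \<Rightarrow> 'a set set \<Rightarrow> 'a set set \<Rightarrow> 'a set set \<Rightarrow> bool" where
  "alt_even_path_same_layer B M1 M2 C \<longleftrightarrow>
     (\<exists>xs. distinct xs \<and> length xs \<ge> 2 \<and> even (length xs - 1) \<and>
        C = walk_edges xs \<and>
        walk_alternating M1 xs \<and> walk_alternating M2 xs \<and>
        (\<exists>n. hd xs \<in> B n \<and> last xs \<in> B n \<and>
             (n = 0 \<or> (hd xs \<notin> B (n - 1) \<and> last xs \<notin> B (n - 1)))))"

end

theory Submission
  imports Defs
begin

text \<open>
  Let \<open>C\<close> be a component of \<open>M1 \<oplus> M2\<close>. Replacing the edges of \<open>M2\<close> in \<open>C\<close> by those of
  \<open>M1\<close>, or vice versa, again gives a matching; inside \<open>C\<close> it misses exactly the vertices missed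
  by the other matching.
  Since neither \<open>M1\<close> nor \<open>M2\<close> can be lexicographically improved, every \<open>B n\<close> contains as many
  vertices of \<open>C\<close> missed by \<open>M1\<close> as vertices missed by \<open>M2\<close>.

  Every vertex lies on at most one edge of \<open>M1 - M2\<close> and at most one of \<open>M2 - M1\<close>, so \<open>C\<close> is
  traced out by an integer-indexed walk alternating between the two. If the walk returns to a
  vertex, \<open>C\<close> is an even cycle; otherwise it is a double ray, a ray or a finite path. Only end
  vertices are missed, an end being missed by \<open>M1\<close> or by \<open>M2\<close> according to the parity of its
  index. The counting identity therefore excludes rays and paths of odd length, and forces the
  two ends of an even path into exactly the same sets \<open>B n\<close>.
\<close>

lemma simple_graph_edge_at:
  assumes "simple_graph V E" "e \<in> E" "y \<in> e"
  obtains z where "z \<noteq> y" "y \<in> V" "z \<in> V" "e = {y, z}"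
  using assms unfolding simple_graph_def by (metis insert_commute insert_iff singletonD)

lemma simple_graph_edge_neq: "simple_graph V E \<Longrightarrow> {a, b} \<in> E \<Longrightarrow> a \<noteq> b"
  unfolding simple_graph_def by (metis doubleton_eq_iff)

lemma simple_graph_Union_subset: "simple_graph V E \<Longrightarrow> \<Union>E \<subseteq> V"
  by (metis UnionE simple_graph_edge_at subsetI)

lemma matching_subset: "matching E M \<Longrightarrow> M \<subseteq> E"
  unfolding matching_def by blast

lemma matching_disjoint: "matching E M \<Longrightarrow> e \<in> M \<Longrightarrow> f \<in> M \<Longrightarrow> e \<noteq> f \<Longrightarrow> e \<inter> f = {}"
  unfolding matching_def by blast

lemma matching_Diff: "matching E M \<Longrightarrow> matching E (M - M')"
  unfolding matching_def by blast

lemma matching_sym_diff_subset: "matching E M1 \<Longrightarrow> matching E M2 \<Longrightarrow> M1 \<oplus> M2 \<subseteq> E"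
  using matching_subset unfolding sym_diff_def by blast

lemma sym_diff_commute: "S \<oplus> T = T \<oplus> S"
  unfolding sym_diff_def by blast

definition partner :: "'a set set \<Rightarrow> 'a \<Rightarrow> 'a option" where
  "partner M a = (if \<exists>b. {a, b} \<in> M then Some (THE b. {a, b} \<in> M) else None)"

lemma partner_eq_Some_iff:
  assumes "matching E M"
  shows "partner M a = Some b \<longleftrightarrow> {a, b} \<in> M"
proof -
  have unique: "c = b" if "{a, b} \<in> M" "{a, c} \<in> M" for b c
  proof -
    have "{a, b} \<inter> {a, c} \<noteq> {}" by blast
    then have "{a, b} = {a, c}" using assms that unfolding matching_def by (metis disjoint_iff)
    then show "c = b" by (metis doubleton_eq_iff)
  qed
  have the_eq: "(THE b. {a, b} \<in> M) = c" if "{a, c} \<in> M" for c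
    by (rule the_equality) (use that unique in auto)
  show ?thesis
    unfolding partner_def using the_eq by auto
qed

lemma walk_edges_map_upt: "walk_edges (map h [0..<Suc n]) = {{h k, h (Suc k)} | k. k < n}"
  unfolding walk_edges_def setcompr_eq_image by (rule image_cong) (auto simp del: upt_Suc)

lemma walk_alternating_map_upt:
  assumes "\<And>k. Suc (Suc k) < n \<Longrightarrow> {h k, h (Suc k)} \<in> M \<longleftrightarrow> {h (Suc k), h (Suc (Suc k))} \<notin> M"
  shows "walk_alternating M (map h [0..<n])"
  unfolding walk_alternating_def using assms by (simp del: upt_Suc)

lemma periodic_mod:
  fixes g :: "int \<Rightarrow> 'b"
  assumes periodic: "\<And>m. g (m + p) = g m"
  shows "g (m mod p) = g m"
proof -
  have shift: "g (m + q * p) = g m" for q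
  proof (induction q rule: int_induct[where k = 0])
    case (step1 q)
    have "g (m + (q + 1) * p) = g ((m + q * p) + p)" by (simp add: algebra_simps)
    also have "\<dots> = g m" using periodic step1.IH by simp
    finally show ?case .
  next
    case (step2 q)
    have "g (m + (q - 1) * p) = g ((m + (q - 1) * p) + p)" using periodic by simp
    also have "\<dots> = g (m + q * p)" by (simp add: algebra_simps)
    finally show ?case using step2.IH by simp
  qed simp
  have "m mod p = m + (- (m div p)) * p" by (simp add: minus_div_mult_eq_mod[symmetric])
  then show ?thesis using shift by metis
qed

lemma card_Int_singleton_unbalanced:
  assumes "A \<inter> A' = {}" "A \<union> A' = {u}" "u \<in> X"
  shows "card (A \<inter> X) \<noteq> card (A' \<inter> X)"
proof (cases "u \<in> A")
  case True
  then have "A \<inter> X = {u}" "A' \<inter> X = {}" using assms by auto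
  then show ?thesis by simp
next
  case False
  then have "A' \<inter> X = {u}" "A \<inter> X = {}" using assms by auto
  then show ?thesis by simp
qed

lemma balanced_pair:
  assumes "A \<inter> A' = {}" "A \<union> A' = {u, v}" "u \<noteq> v"
    and balanced: "\<And>n. card (A \<inter> X n) = card (A' \<inter> X n)" and "u \<in> X m" "v \<in> X m"
  shows "u \<in> A \<longleftrightarrow> v \<in> A'" and "u \<in> X n \<longleftrightarrow> v \<in> X n"
proof -
  have "A \<inter> X m = A" "A' \<inter> X m = A'" using assms(2,5,6) by auto
  then have "card A = card A'" using balanced[of m] by simp
  moreover have "finite A" "finite A'" using assms(2) by (auto intro: finite_subset[of _ "{u, v}"])
  then have "card A + card A' = 2" using card_Un_disjoint[of A A'] assms(1-3) by simp
  ultimately have "card A = 1" "card A' = 1" by simp_all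
  then obtain a b where "A = {a}" "A' = {b}" by (meson card_1_singletonE)
  then have split: "(A = {u} \<and> A' = {v}) \<or> (A = {v} \<and> A' = {u})"
    using assms(2) by (auto simp: doubleton_eq_iff)
  then show "u \<in> A \<longleftrightarrow> v \<in> A'" using assms(3) by auto
  show "u \<in> X n \<longleftrightarrow> v \<in> X n"
    using split balanced[of n] by (cases "u \<in> X n"; cases "v \<in> X n") auto
qed

lemma least_common_layer:
  fixes B :: "nat \<Rightarrow> 'a set"
  assumes "\<And>n. u \<in> B n \<longleftrightarrow> v \<in> B n" "u \<in> B m"
  shows "\<exists>n. u \<in> B n \<and> v \<in> B n \<and> (n = 0 \<or> u \<notin> B (n - 1) \<and> v \<notin> B (n - 1))"
proof -
  define n where "n = (LEAST n. u \<in> B n)"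
  have "u \<in> B n" unfolding n_def by (rule LeastI) (rule assms(2))
  moreover have "n = 0 \<or> u \<notin> B (n - 1)"
    using not_less_Least[of "n - 1" "\<lambda>n. u \<in> B n"] unfolding n_def by (cases "n = 0") auto
  ultimately show ?thesis using assms(1) by blast
qed

section \<open>Swapping along a component of the symmetric difference\<close>

definition component_closed :: "'a set set \<Rightarrow> 'a set set \<Rightarrow> bool" where
  "component_closed D C \<longleftrightarrow> C \<subseteq> D \<and> (\<forall>e\<in>D. e \<inter> \<Union>C \<noteq> {} \<longrightarrow> e \<in> C)"

definition missed_in :: "'a set set \<Rightarrow> 'a set \<Rightarrow> 'a set" where
  "missed_in M S = {v \<in> S. misses M v}"

lemma component_closed_subset: "component_closed D C \<Longrightarrow> C \<subseteq> D"
  unfolding component_closed_def by blast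

lemma component_closed_mem: "component_closed D C \<Longrightarrow> e \<in> D \<Longrightarrow> v \<in> e \<Longrightarrow> v \<in> \<Union>C \<Longrightarrow> e \<in> C"
  unfolding component_closed_def by blast

lemma edge_component_closed:
  assumes "simple_graph V E" "D \<subseteq> E" "C \<in> edge_components D"
  shows "component_closed D C"
proof -
  obtain x where C: "C = {e \<in> D. \<exists>y\<in>e. (\<lambda>a b. {a, b} \<in> D)\<^sup>*\<^sup>* x y}"
    using assms(3) unfolding edge_components_def by blast
  have "e \<in> C" if e: "e \<in> D" "z \<in> e" and c: "c \<in> C" "z \<in> c" for e c z
  proof -
    obtain y where y: "y \<in> c" "(\<lambda>a b. {a, b} \<in> D)\<^sup>*\<^sup>* x y" using c C by blast
    obtain w where "c = {y, w}"
      using simple_graph_edge_at[OF assms(1) _ y(1)] c C assms(2) by blast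
    then have "y = z \<or> {y, z} \<in> D" using c C by auto
    then have "(\<lambda>a b. {a, b} \<in> D)\<^sup>*\<^sup>* x z"
      using y(2) by (auto intro: rtranclp.rtrancl_into_rtrancl)
    then show ?thesis using e C by blast
  qed
  then show ?thesis unfolding component_closed_def using C by blast
qed

lemma swap_edge_iff:
  assumes m1: "matching E M1" and m2: "matching E M2"
    and closed: "component_closed (M1 \<oplus> M2) C" and "v \<in> e"
  shows "e \<in> M2 \<oplus> C \<longleftrightarrow> (if v \<in> \<Union>C then e \<in> M1 else e \<in> M2)"
proof (cases "v \<in> \<Union>C")
  case True
  then obtain c where c: "c \<in> C" "v \<in> c" by blast
  have C_sub: "C \<subseteq> M1 \<oplus> M2" and into_C: "e \<in> M1 \<oplus> M2 \<Longrightarrow> e \<in> C"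
    using component_closed_subset[OF closed] component_closed_mem[OF closed _ \<open>v \<in> e\<close> True]
    by blast+
  have "e \<notin> M1 \<inter> M2"
  proof
    assume e: "e \<in> M1 \<inter> M2"
    have "c \<in> M1 \<or> c \<in> M2" "c \<noteq> e"
      using c(1) C_sub e unfolding sym_diff_def by auto
    moreover have "c \<inter> e \<noteq> {}" using c(2) \<open>v \<in> e\<close> by blast
    ultimately show False
      using e m1 m2 unfolding matching_def by (meson IntD1 IntD2)
  qed
  then show ?thesis
    using True C_sub into_C unfolding sym_diff_def by auto
next
  case False
  then show ?thesis using \<open>v \<in> e\<close> unfolding sym_diff_def by auto
qed

lemma swap_matching:
  assumes m1: "matching E M1" and m2: "matching E M2"
    and closed: "component_closed (M1 \<oplus> M2) C"
  shows "matching E (M2 \<oplus> C)"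
proof -
  have "M2 \<oplus> C \<subseteq> M1 \<union> M2"
    using component_closed_subset[OF closed] unfolding sym_diff_def by blast
  then have "M2 \<oplus> C \<subseteq> E" using matching_subset[OF m1] matching_subset[OF m2] by blast
  moreover have "e \<inter> f = {}" if "e \<in> M2 \<oplus> C" "f \<in> M2 \<oplus> C" "e \<noteq> f" for e f
  proof (rule ccontr)
    assume "e \<inter> f \<noteq> {}"
    then obtain v where v: "v \<in> e" "v \<in> f" by blast
    have "(e \<in> M1 \<and> f \<in> M1) \<or> (e \<in> M2 \<and> f \<in> M2)"
      using that(1,2) swap_edge_iff[OF assms v(1)] swap_edge_iff[OF assms v(2)]
      by (cases "v \<in> \<Union>C") auto
    then show False
      using matching_disjoint[OF m1] matching_disjoint[OF m2] v \<open>e \<noteq> f\<close> by blast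
  qed
  ultimately show ?thesis unfolding matching_def by simp
qed

lemma misses_swap:
  assumes "matching E M1" "matching E M2" "component_closed (M1 \<oplus> M2) C"
  shows "misses (M2 \<oplus> C) v \<longleftrightarrow> (if v \<in> \<Union>C then misses M1 v else misses M2 v)"
  unfolding misses_def using swap_edge_iff[OF assms, of v] by (cases "v \<in> \<Union>C") auto

lemma miss_seq_swap:
  assumes "matching E M1" "matching E M2" "component_closed (M1 \<oplus> M2) C" "finite (B n)"
  shows "miss_seq B (M2 \<oplus> C) n + card (missed_in M2 (\<Union>C) \<inter> B n)
       = miss_seq B M2 n + card (missed_in M1 (\<Union>C) \<inter> B n)"
proof -
  let ?outside = "{v \<in> B n. misses M2 v \<and> v \<notin> \<Union>C}"
  have "{v \<in> B n. misses (M2 \<oplus> C) v} = ?outside \<union> (missed_in M1 (\<Union>C) \<inter> B n)"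
    using misses_swap[OF assms(1-3)] unfolding missed_in_def by auto
  then have swapped: "miss_seq B (M2 \<oplus> C) n = card ?outside + card (missed_in M1 (\<Union>C) \<inter> B n)"
    unfolding miss_seq_def by (simp add: card_Un_disjoint assms(4) missed_in_def disjoint_iff)
  have "{v \<in> B n. misses M2 v} = ?outside \<union> (missed_in M2 (\<Union>C) \<inter> B n)"
    unfolding missed_in_def by auto
  then have "miss_seq B M2 n = card ?outside + card (missed_in M2 (\<Union>C) \<inter> B n)"
    unfolding miss_seq_def by (simp add: card_Un_disjoint assms(4) missed_in_def disjoint_iff)
  with swapped show ?thesis by simp
qed

text \<open>If the two counts first differed at \<open>n\<close>, swapping along \<open>C\<close> would lexicographically
  improve \<open>M1\<close> or \<open>M2\<close>.\<close>

lemma maximum_matchings_balanced: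
  assumes max1: "maximum_matching E B M1" and max2: "maximum_matching E B M2"
    and fin: "\<And>n. finite (B n)" and closed: "component_closed (M1 \<oplus> M2) C"
  shows "card (missed_in M1 (\<Union>C) \<inter> B n) = card (missed_in M2 (\<Union>C) \<inter> B n)"
proof -
  define a where "a n = card (missed_in M1 (\<Union>C) \<inter> B n)" for n
  define b where "b n = card (missed_in M2 (\<Union>C) \<inter> B n)" for n
  have m1: "matching E M1" and m2: "matching E M2"
    using max1 max2 unfolding maximum_matching_def by auto
  have closed': "component_closed (M2 \<oplus> M1) C"
    using closed by (simp add: sym_diff_commute)
  have seq2: "miss_seq B (M2 \<oplus> C) n + b n = miss_seq B M2 n + a n" for n
    unfolding a_def b_def by (rule miss_seq_swap[OF m1 m2 closed fin])
  have seq1: "miss_seq B (M1 \<oplus> C) n + a n = miss_seq B M1 n + b n" for n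
    unfolding a_def b_def by (rule miss_seq_swap[OF m2 m1 closed' fin])
  have not_less2: "\<not> matching_less B M2 (M2 \<oplus> C)"
    using max2 swap_matching[OF m1 m2 closed] unfolding maximum_matching_def by blast
  have not_less1: "\<not> matching_less B M1 (M1 \<oplus> C)"
    using max1 swap_matching[OF m2 m1 closed'] unfolding maximum_matching_def by blast
  have "a n = b n" for n
  proof (induction n rule: less_induct)
    case (less n)
    then have "\<forall>m<n. miss_seq B M2 m = miss_seq B (M2 \<oplus> C) m"
      and "\<forall>m<n. miss_seq B M1 m = miss_seq B (M1 \<oplus> C) m"
      using seq1 seq2 by (metis add_right_cancel)+
    then have "\<not> miss_seq B M2 n > miss_seq B (M2 \<oplus> C) n"
      and "\<not> miss_seq B M1 n > miss_seq B (M1 \<oplus> C) n"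
      using not_less1 not_less2 unfolding matching_less_def by blast+
    then show ?case using seq1[of n] seq2[of n] by linarith
  qed
  then show ?thesis unfolding a_def b_def .
qed

section \<open>Alternating walks\<close>

text \<open>The walk through \<open>x\<close> whose step from index \<open>i\<close> to \<open>i + 1\<close> is taken by \<open>N (even i)\<close>;
  negative indices are reached by walking backwards from \<open>x\<close>, which flips the parity.\<close>

fun alt_iter :: "(bool \<Rightarrow> 'a \<Rightarrow> 'a option) \<Rightarrow> 'a \<Rightarrow> nat \<Rightarrow> 'a option" where
  "alt_iter N x 0 = Some x"
| "alt_iter N x (Suc k) = Option.bind (alt_iter N x k) (N (even k))"

definition alt_walk :: "(bool \<Rightarrow> 'a \<Rightarrow> 'a option) \<Rightarrow> 'a \<Rightarrow> int \<Rightarrow> 'a option" where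
  "alt_walk N x i =
     (if 0 \<le> i then alt_iter N x (nat i) else alt_iter (\<lambda>p. N (\<not> p)) x (nat (- i)))"

lemma alt_iter_defined_le:
  assumes "alt_iter N x k \<noteq> None" "m \<le> k"
  shows "alt_iter N x m \<noteq> None"
  using assms
proof (induction k)
  case (Suc k)
  then show ?case by (cases "alt_iter N x k") (auto simp: le_Suc_eq)
qed simp

lemma alt_walk_0 [simp]: "alt_walk N x 0 = Some x"
  unfolding alt_walk_def by simp

lemma alt_walk_defined_between:
  assumes "alt_walk N x i \<noteq> None" "alt_walk N x k \<noteq> None" "i \<le> j" "j \<le> k"
  shows "alt_walk N x j \<noteq> None"
proof (cases "0 \<le> j")
  case True
  then show ?thesis
    using assms(2,4) alt_iter_defined_le[of N x "nat k" "nat j"] unfolding alt_walk_def by simp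
next
  case False
  then show ?thesis
    using assms(1,3) alt_iter_defined_le[of "\<lambda>p. N (\<not> p)" x "nat (- i)" "nat (- j)"]
    unfolding alt_walk_def by (simp split: if_splits)
qed

context
  fixes N :: "bool \<Rightarrow> 'a \<Rightarrow> 'a option"
  assumes N_sym: "\<And>p a b. N p a = Some b \<Longrightarrow> N p b = Some a"
begin

lemma alt_walk_Suc:
  assumes "alt_walk N x i = Some a"
  shows "alt_walk N x (i + 1) = N (even i) a"
proof (cases "0 \<le> i")
  case True
  then have "alt_walk N x (i + 1) = alt_iter N x (Suc (nat i))"
    unfolding alt_walk_def by (simp add: nat_add_distrib)
  then show ?thesis using assms True unfolding alt_walk_def by (simp add: even_nat_iff)
next
  case False
  define k where "k = nat (- i - 1)"
  have i: "i = - int (Suc k)" and "nat (- i) = Suc k" using False unfolding k_def by simp_all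
  then have "alt_iter (\<lambda>p. N (\<not> p)) x (Suc k) = Some a"
    using assms False unfolding alt_walk_def by simp
  then obtain c where c: "alt_iter (\<lambda>p. N (\<not> p)) x k = Some c" "N (odd k) c = Some a"
    by (cases "alt_iter (\<lambda>p. N (\<not> p)) x k") auto
  have "i + 1 = - int k" using i by simp
  then have "alt_walk N x (i + 1) = Some c"
    using c(1) unfolding alt_walk_def by (cases "k = 0") auto
  then show ?thesis using N_sym[OF c(2)] i by simp
qed

lemma alt_walk_pred:
  assumes "alt_walk N x i = Some a"
  shows "alt_walk N x (i - 1) = N (odd i) a"
proof (cases "0 < i")
  case True
  define k where "k = nat (i - 1)"
  have i: "i = int (Suc k)" and "nat i = Suc k" using True unfolding k_def by simp_all
  then have "alt_iter N x (Suc k) = Some a" using assms True unfolding alt_walk_def by simp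
  then obtain c where c: "alt_iter N x k = Some c" "N (even k) c = Some a"
    by (cases "alt_iter N x k") auto
  have "alt_walk N x (i - 1) = Some c" using c(1) i unfolding alt_walk_def by simp
  then show ?thesis using N_sym[OF c(2)] i by simp
next
  case False
  then have "alt_walk N x (i - 1) = alt_iter (\<lambda>p. N (\<not> p)) x (Suc (nat (- i)))"
    unfolding alt_walk_def by (simp add: nat_diff_distrib' Suc_nat_eq_nat_zadd1)
  then show ?thesis using assms False unfolding alt_walk_def by (cases "i = 0") (auto simp: even_nat_iff)
qed

end

locale alternating_component =
  fixes V :: "'a set" and E M1 M2 :: "'a set set" and x :: 'a
  assumes simple: "simple_graph V E"
    and matching1: "matching E M1" and matching2: "matching E M2"
    and start: "x \<in> \<Union>(M1 \<oplus> M2)"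
begin

definition step :: "bool \<Rightarrow> 'a \<Rightarrow> 'a option" where
  "step p = partner (if p then M1 - M2 else M2 - M1)"

abbreviation walk :: "int \<Rightarrow> 'a option" where
  "walk \<equiv> alt_walk step x"

definition walk_verts :: "'a set" where
  "walk_verts = {a. \<exists>i. walk i = Some a}"

definition walk_edge_set :: "'a set set" where
  "walk_edge_set = {{a, b} | a b. \<exists>i. walk i = Some a \<and> walk (i + 1) = Some b}"

lemma step_eq_Some_iff: "step p a = Some b \<longleftrightarrow> {a, b} \<in> (if p then M1 - M2 else M2 - M1)"
proof -
  have "matching E (if p then M1 - M2 else M2 - M1)"
    using matching_Diff[OF matching1] matching_Diff[OF matching2] by simp
  then show ?thesis unfolding step_def by (rule partner_eq_Some_iff)
qed

lemma step_sym: "step p a = Some b \<Longrightarrow> step p b = Some a"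
  by (simp add: step_eq_Some_iff insert_commute)

lemma step_neq: "step p a \<noteq> Some a"
proof
  assume "step p a = Some a"
  then have "{a, a} \<in> E"
    using step_eq_Some_iff matching_subset[OF matching1] matching_subset[OF matching2]
    by (auto split: if_splits)
  then show False using simple_graph_edge_neq[OF simple] by blast
qed

lemma step_True_False: "step True a = Some b \<Longrightarrow> step False a \<noteq> Some b"
  by (simp add: step_eq_Some_iff)

lemma sym_diff_edge_iff: "{a, b} \<in> M1 \<oplus> M2 \<longleftrightarrow> step True a = Some b \<or> step False a = Some b"
  unfolding step_eq_Some_iff sym_diff_def by auto

lemma sym_diff_edge_at:
  assumes "e \<in> M1 \<oplus> M2" "y \<in> e"
  obtains z where "e = {y, z}"
  using simple_graph_edge_at[OF simple _ assms(2)] matching_sym_diff_subset[OF matching1 matching2] assms(1)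
  by blast

lemma walk_Suc: "walk i = Some a \<Longrightarrow> walk (i + 1) = step (even i) a"
  by (rule alt_walk_Suc[OF step_sym])

lemma walk_pred: "walk i = Some a \<Longrightarrow> walk (i - 1) = step (odd i) a"
  by (rule alt_walk_pred[OF step_sym])

lemma walk_edge_sides:
  assumes "walk i = Some a" "walk (i + 1) = Some b"
  shows "({a, b} \<in> M1 \<longleftrightarrow> even i) \<and> ({a, b} \<in> M2 \<longleftrightarrow> odd i)"
  using walk_Suc[OF assms(1)] assms(2) step_eq_Some_iff[of "even i" a b] by (cases "even i") auto

lemma walk_edge_in_sym_diff: "walk i = Some a \<Longrightarrow> walk (i + 1) = Some b \<Longrightarrow> {a, b} \<in> M1 \<oplus> M2"
  using walk_Suc sym_diff_edge_iff by (cases "even i") auto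

lemma walk_neighbour:
  assumes "walk i = Some a" "{a, b} \<in> M1 \<oplus> M2"
  shows "walk (i + 1) = Some b \<or> walk (i - 1) = Some b"
  using walk_Suc[OF assms(1)] walk_pred[OF assms(1)] assms(2) sym_diff_edge_iff
  by (cases "even i") auto

lemma walk_reachable:
  "walk i = Some a \<Longrightarrow> (\<lambda>a b. {a, b} \<in> M1 \<oplus> M2)\<^sup>*\<^sup>* x a"
proof (induction i arbitrary: a rule: int_induct[where k = 0])
  case base
  then show ?case by simp
next
  case (step1 i)
  then obtain c where c: "walk i = Some c"
    using alt_walk_defined_between[of step x 0 "i + 1" i] by fastforce
  then show ?case
    using step1 walk_edge_in_sym_diff[OF c step1.prems] by (auto intro: rtranclp.rtrancl_into_rtrancl)
next
  case (step2 i)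
  then obtain c where c: "walk i = Some c"
    using alt_walk_defined_between[of step x "i - 1" 0 i] by fastforce
  have "{c, a} \<in> M1 \<oplus> M2"
    using walk_edge_in_sym_diff[of "i - 1" a c] step2.prems c by (simp add: insert_commute)
  then show ?case
    using step2.IH[OF c] by (auto intro: rtranclp.rtrancl_into_rtrancl)
qed

lemma reachable_walk_verts:
  "(\<lambda>a b. {a, b} \<in> M1 \<oplus> M2)\<^sup>*\<^sup>* x y \<Longrightarrow> y \<in> walk_verts"
proof (induction rule: rtranclp_induct)
  case base
  show ?case unfolding walk_verts_def using alt_walk_0[of step x] by blast
next
  case (step y z)
  then show ?case using walk_neighbour unfolding walk_verts_def by blast
qed

lemma component_eq_walk_edge_set:
  "{e \<in> M1 \<oplus> M2. \<exists>y\<in>e. (\<lambda>a b. {a, b} \<in> M1 \<oplus> M2)\<^sup>*\<^sup>* x y} = walk_edge_set"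
proof (intro equalityI subsetI)
  fix e assume "e \<in> {e \<in> M1 \<oplus> M2. \<exists>y\<in>e. (\<lambda>a b. {a, b} \<in> M1 \<oplus> M2)\<^sup>*\<^sup>* x y}"
  then obtain y where e: "e \<in> M1 \<oplus> M2" "y \<in> e" "(\<lambda>a b. {a, b} \<in> M1 \<oplus> M2)\<^sup>*\<^sup>* x y" by blast
  obtain i where i: "walk i = Some y" using reachable_walk_verts[OF e(3)] unfolding walk_verts_def by blast
  obtain z where z: "e = {y, z}" using sym_diff_edge_at[OF e(1,2)] .
  then consider "walk (i + 1) = Some z" | "walk (i - 1) = Some z"
    using walk_neighbour[OF i] e(1) by blast
  then show "e \<in> walk_edge_set"
  proof cases
    case 1
    then show ?thesis using i z unfolding walk_edge_set_def by blast
  next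
    case 2
    then have "{z, y} \<in> walk_edge_set" using i unfolding walk_edge_set_def by force
    then show ?thesis using z by (simp add: insert_commute)
  qed
next
  fix e assume "e \<in> walk_edge_set"
  then obtain a b i where "e = {a, b}" "walk i = Some a" "walk (i + 1) = Some b"
    unfolding walk_edge_set_def by blast
  then show "e \<in> {e \<in> M1 \<oplus> M2. \<exists>y\<in>e. (\<lambda>a b. {a, b} \<in> M1 \<oplus> M2)\<^sup>*\<^sup>* x y}"
    using walk_edge_in_sym_diff walk_reachable by blast
qed

lemma walk_starts: "walk 1 \<noteq> None \<or> walk (- 1) \<noteq> None"
proof -
  obtain e where e: "e \<in> M1 \<oplus> M2" "x \<in> e" using start by blast
  obtain z where "e = {x, z}" using sym_diff_edge_at[OF e] .
  then show ?thesis using walk_neighbour[OF alt_walk_0, of z] e(1) by auto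
qed

lemma walk_defined_between:
  "walk i \<noteq> None \<Longrightarrow> walk k \<noteq> None \<Longrightarrow> i \<le> j \<Longrightarrow> j \<le> k \<Longrightarrow> walk j \<noteq> None"
  by (rule alt_walk_defined_between)

lemma walk_upper_end_max:
  assumes "walk i \<noteq> None" "walk (i + 1) = None" "walk j \<noteq> None"
  shows "j \<le> i"
  using walk_defined_between[OF assms(1,3), of "i + 1"] assms(2) by force

lemma walk_lower_end_min:
  assumes "walk i \<noteq> None" "walk (i - 1) = None" "walk j \<noteq> None"
  shows "i \<le> j"
  using walk_defined_between[OF assms(3,1), of "i - 1"] assms(2) by force

lemma walk_total:
  assumes "\<And>i. walk i \<noteq> None \<Longrightarrow> walk (i + 1) \<noteq> None"
    and "\<And>i. walk i \<noteq> None \<Longrightarrow> walk (i - 1) \<noteq> None"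
  shows "walk j \<noteq> None"
  by (induction j rule: int_induct[where k = 0]) (use assms in auto)

lemma walk_has_neighbour: "walk i \<noteq> None \<Longrightarrow> walk (i + 1) \<noteq> None \<or> walk (i - 1) \<noteq> None"
  using walk_starts walk_defined_between[of 0 i "i - 1"] walk_defined_between[of i 0 "i + 1"]
  by (cases i "0 :: int" rule: linorder_cases) auto

lemma walk_vert_on_edge:
  assumes "walk i = Some a"
  obtains d where "d \<in> walk_edge_set" "a \<in> d"
proof -
  consider b where "walk (i + 1) = Some b" | b where "walk (i - 1) = Some b"
    using walk_has_neighbour assms by blast
  then show ?thesis
  proof cases
    case (1 b)
    then show ?thesis using that[of "{a, b}"] assms unfolding walk_edge_set_def by blast
  next
    case (2 b)
    then have "{b, a} \<in> walk_edge_set" using assms unfolding walk_edge_set_def by force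
    then show ?thesis using that by blast
  qed
qed

lemma walk_edge_set_subset: "walk_edge_set \<subseteq> M1 \<oplus> M2"
  unfolding walk_edge_set_def using walk_edge_in_sym_diff by blast

lemma Union_walk_edge_set: "\<Union>walk_edge_set = walk_verts"
proof
  show "\<Union>walk_edge_set \<subseteq> walk_verts"
    unfolding walk_edge_set_def walk_verts_def by blast
  show "walk_verts \<subseteq> \<Union>walk_edge_set"
    unfolding walk_verts_def using walk_vert_on_edge by blast
qed

lemma step_Some_covered: "step p a = Some b \<Longrightarrow> \<not> misses (if p then M1 else M2) a"
  unfolding step_eq_Some_iff misses_def by (cases p) auto

text \<open>An edge of \<open>M1 \<inter> M2\<close> at \<open>a\<close> would meet the edge of \<open>M1 \<oplus> M2\<close> at \<open>a\<close>, so a vertex of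
  the walk is covered by \<open>M1\<close> resp. \<open>M2\<close> exactly when its \<open>step\<close> is defined.\<close>

lemma step_None_misses:
  assumes "a \<in> walk_verts" "step p a = None"
  shows "misses (if p then M1 else M2) a"
  unfolding misses_def
proof (intro ballI notI)
  fix e assume e: "e \<in> (if p then M1 else M2)" "a \<in> e"
  obtain d where d: "d \<in> M1 \<oplus> M2" "a \<in> d"
    using assms(1) walk_vert_on_edge walk_edge_set_subset unfolding walk_verts_def by blast
  show False
  proof (cases "e \<in> M1 \<inter> M2")
    case True
    then have "d \<noteq> e" using d(1) unfolding sym_diff_def by blast
    moreover have "d \<in> M1 \<or> d \<in> M2" using d(1) unfolding sym_diff_def by blast
    ultimately show False
      using matching_disjoint[OF matching1] matching_disjoint[OF matching2] True d(2) e(2) by blast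
  next
    case False
    have "e \<in> E"
      using e(1) matching_subset[OF matching1] matching_subset[OF matching2] by (auto split: if_splits)
    then obtain b where "e = {a, b}" using simple_graph_edge_at[OF simple _ e(2)] by blast
    then have "step p a = Some b" using e(1) False by (simp add: step_eq_Some_iff split: if_splits)
    then show False using assms(2) by simp
  qed
qed

lemma walk_upper_end_misses:
  assumes "walk i = Some a" "walk (i + 1) = None"
  shows "misses (if even i then M1 else M2) a"
proof -
  have "step (even i) a = None" using walk_Suc[OF assms(1)] assms(2) by simp
  then show ?thesis using step_None_misses assms(1) unfolding walk_verts_def by blast
qed

lemma walk_lower_end_misses:
  assumes "walk i = Some a" "walk (i - 1) = None"
  shows "misses (if odd i then M1 else M2) a"
proof -
  have "step (odd i) a = None" using walk_pred[OF assms(1)] assms(2) by simp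
  then show ?thesis using step_None_misses assms(1) unfolding walk_verts_def by blast
qed

lemma walk_interior_covered:
  assumes "walk i = Some a" "walk (i + 1) \<noteq> None" "walk (i - 1) \<noteq> None"
  shows "\<not> misses M1 a \<and> \<not> misses M2 a"
proof -
  obtain b c where b: "step (even i) a = Some b" and c: "step (odd i) a = Some c"
    using walk_Suc[OF assms(1)] walk_pred[OF assms(1)] assms(2,3) by fastforce
  show ?thesis using step_Some_covered[OF b] step_Some_covered[OF c] by (cases "even i") auto
qed

lemma missed_at_end:
  assumes "v \<in> missed_in M1 walk_verts \<union> missed_in M2 walk_verts" "walk i = Some v"
  shows "walk (i + 1) = None \<or> walk (i - 1) = None"
  using walk_interior_covered[OF assms(2)] assms(1) unfolding missed_in_def by blast

lemma missed_disjoint: "missed_in M1 walk_verts \<inter> missed_in M2 walk_verts = {}"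
proof -
  have "\<not> (misses M1 v \<and> misses M2 v)" if v: "v \<in> walk_verts" for v
  proof -
    obtain i where "walk i = Some v" using v unfolding walk_verts_def by blast
    then obtain d where "d \<in> walk_edge_set" "v \<in> d" by (rule walk_vert_on_edge)
    then have "d \<in> M1 \<oplus> M2" "v \<in> d" using walk_edge_set_subset by blast+
    then show ?thesis unfolding misses_def sym_diff_def by blast
  qed
  then show ?thesis unfolding missed_in_def by blast
qed

definition segment :: "int \<Rightarrow> nat \<Rightarrow> 'a list" where
  "segment lo n = map (\<lambda>k. the (walk (lo + int k))) [0..<Suc n]"

lemma length_segment [simp]: "length (segment lo n) = Suc n"
  unfolding segment_def by simp

lemma segment_Suc: "segment lo (Suc n) = segment lo n @ [the (walk (lo + int (Suc n)))]"
  unfolding segment_def by simp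

lemma nth_segment: "k \<le> n \<Longrightarrow> segment lo n ! k = the (walk (lo + int k))"
  unfolding segment_def by (simp del: upt_Suc)

lemma distinct_segment:
  assumes "inj_on walk {lo..lo + int n}" "\<And>k. k \<le> n \<Longrightarrow> walk (lo + int k) \<noteq> None"
  shows "distinct (segment lo n)"
  unfolding segment_def distinct_map
proof
  show "inj_on (\<lambda>k. the (walk (lo + int k))) (set [0..<Suc n])"
  proof (rule inj_onI)
    fix k l assume "k \<in> set [0..<Suc n]" "l \<in> set [0..<Suc n]"
      and "the (walk (lo + int k)) = the (walk (lo + int l))"
    then have "walk (lo + int k) = walk (lo + int l)" "lo + int k \<in> {lo..lo + int n}" "lo + int l \<in> {lo..lo + int n}"
      using assms(2)[of k] assms(2)[of l] by (auto simp: option.expand)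
    then show "k = l" using inj_onD[OF assms(1)] by fastforce
  qed
qed simp

lemma segment_edges:
  assumes "\<And>k. k \<le> n \<Longrightarrow> walk (lo + int k) \<noteq> None"
  shows "walk_edges (segment lo n) =
    {{a, b} | a b. \<exists>i. lo \<le> i \<and> i < lo + int n \<and> walk i = Some a \<and> walk (i + 1) = Some b}"
    (is "_ = ?E")
proof -
  define v where "v k = the (walk (lo + int k))" for k
  have v: "walk (lo + int k) = Some (v k)" if "k \<le> n" for k
    using assms[OF that] unfolding v_def by simp
  have v_Suc: "walk (lo + int k + 1) = Some (v (Suc k))" if "k < n" for k
    using v[of "Suc k"] that
    by (metis Suc_leI add.assoc of_nat_Suc add.commute)
  have "{v k, v (Suc k)} \<in> ?E" if "k < n" for k
  proof -
    have "lo \<le> lo + int k" "lo + int k < lo + int n" using that by simp_all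
    with v[of k] v_Suc[of k] that show ?thesis
      by (intro CollectI exI[of _ "v k"] exI[of _ "v (Suc k)"] conjI exI[of _ "lo + int k"]) simp_all
  qed
  moreover have "\<exists>k<n. e = {v k, v (Suc k)}" if "e \<in> ?E" for e
  proof -
    obtain a b i where e: "e = {a, b}" "lo \<le> i" "i < lo + int n" "walk i = Some a" "walk (i + 1) = Some b"
      using \<open>e \<in> ?E\<close> by blast
    define k where "k = nat (i - lo)"
    have i: "i = lo + int k" and k: "k < n" using e(2,3) unfolding k_def by auto
    then have "a = v k" "b = v (Suc k)" using e(4,5) v[of k] v_Suc[of k] by simp_all
    then show ?thesis using e(1) k by blast
  qed
  ultimately show ?thesis
    unfolding segment_def walk_edges_map_upt v_def[symmetric] by blast
qed

lemma segment_alternating: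
  assumes "\<And>k. k \<le> n \<Longrightarrow> walk (lo + int k) \<noteq> None"
  shows "walk_alternating M1 (segment lo n) \<and> walk_alternating M2 (segment lo n)"
proof -
  define v where "v k = the (walk (lo + int k))" for k
  define P where "P k \<longleftrightarrow> even (lo + int k)" for k
  have v: "walk (lo + int k) = Some (v k)" if "k \<le> n" for k
    using assms[OF that] unfolding v_def by simp
  have sides: "({v k, v (Suc k)} \<in> M1 \<longleftrightarrow> P k) \<and> ({v k, v (Suc k)} \<in> M2 \<longleftrightarrow> \<not> P k)"
    if "k < n" for k
  proof -
    have "walk (lo + int k + 1) = Some (v (Suc k))"
      using v[of "Suc k"] that by (metis Suc_leI add.assoc of_nat_Suc add.commute)
    then show ?thesis using walk_edge_sides[OF v[of k]] that unfolding P_def by simp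
  qed
  have "P (Suc k) \<longleftrightarrow> \<not> P k" for k unfolding P_def by simp
  then show ?thesis
    unfolding segment_def v_def[symmetric] using sides
    by (auto simp del: upt_Suc intro!: walk_alternating_map_upt)
qed

section \<open>The shape of a component\<close>

lemma walk_periodic:
  assumes a: "walk i0 = Some a" "walk (i0 + int p) = Some a" and "even p"
  shows "walk (m + int p) = walk m"
proof (induction m rule: int_induct[where k = i0])
  case base
  show ?case using a by simp
next
  case (step1 m)
  show ?case
  proof (cases "walk m")
    case None
    have "walk (m + 1) = None"
      using walk_defined_between[of i0 "m + 1" m] a(1) None step1.hyps by fastforce
    moreover have "walk (m + 1 + int p) = None"
      using walk_defined_between[of i0 "m + 1 + int p" "m + int p"] a(1) None step1 by fastforce
    ultimately show ?thesis by simp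
  next
    case (Some c)
    have "walk (m + int p + 1) = step (even (m + int p)) c" using walk_Suc step1.IH Some by simp
    then show ?thesis using walk_Suc[OF Some] \<open>even p\<close> by (simp add: add_ac)
  qed
next
  case (step2 m)
  show ?case
  proof (cases "walk m")
    case None
    have "walk (m - 1) = None"
      using walk_defined_between[of "m - 1" "i0" m] a(1) None step2.hyps by fastforce
    moreover have "walk (m - 1 + int p) = None"
      using walk_defined_between[of "m - 1 + int p" "i0 + int p" "m + int p"] a(2) None step2
      by fastforce
    ultimately show ?thesis by simp
  next
    case (Some c)
    have "walk (m + int p - 1) = step (odd (m + int p)) c" using walk_pred step2.IH Some by simp
    then show ?thesis using walk_pred[OF Some] \<open>even p\<close> by (simp add: algebra_simps)
  qed
qed

text \<open>The shortest return time of the walk is even and at least 4: an odd return time \<open>p\<close>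
  would give the shorter return time \<open>p - 2\<close> (or a loop if \<open>p = 1\<close>), and \<open>p = 2\<close> would put one
  edge into both \<open>M1 - M2\<close> and \<open>M2 - M1\<close>.\<close>

lemma walk_least_return_time:
  assumes a: "walk i = Some a" "walk (i + int p) = Some a" "0 < p"
    and least: "\<And>j d. 0 < d \<Longrightarrow> d < p \<Longrightarrow> walk j \<noteq> None \<Longrightarrow> walk (j + int d) \<noteq> walk j"
  shows "even p" "p \<noteq> 2"
proof -
  have defined: "walk j \<noteq> None" if "i \<le> j" "j \<le> i + int p" for j
    using walk_defined_between[of i "i + int p" j] a that by simp
  show "even p"
  proof (rule ccontr)
    assume "odd p"
    then have same: "walk (i + 1) = walk (i + int p - 1)"
      using walk_Suc[OF a(1)] walk_pred[OF a(2)] by simp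
    show False
    proof (cases "p = 1")
      case True
      then show False using same a(1) walk_Suc[OF a(1)] step_neq by simp
    next
      case False
      then have "2 < p" using \<open>odd p\<close> \<open>0 < p\<close> by presburger
      then have "walk (i + 1 + int (p - 2)) = walk (i + 1)"
        using same by (simp add: of_nat_diff algebra_simps)
      then show False using least[of "p - 2" "i + 1"] defined[of "i + 1"] \<open>2 < p\<close> by simp
    qed
  qed
  show "p \<noteq> 2"
  proof
    assume "p = 2"
    then obtain b where b: "walk (i + 1) = Some b" using defined[of "i + 1"] by auto
    have a2: "walk (i + 1 + 1) = Some a" using a(2) \<open>p = 2\<close> by (simp add: add.assoc)
    have "step (odd (i + 1 + 1)) a = Some b" using walk_pred[OF a2] b by (simp add: add.commute)
    moreover have "step (even i) a = Some b" using walk_Suc[OF a(1)] b by simp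
    ultimately show False using step_True_False by (cases "even i") auto
  qed
qed

lemma walk_least_return_periodic:
  assumes "walk i \<noteq> None" "walk (i + int d) = walk i" "0 < d"
  obtains p where "even p" "4 \<le> p" "\<And>m. walk (m + int p) = walk m"
    and "\<And>j d. 0 < d \<Longrightarrow> d < p \<Longrightarrow> walk j \<noteq> None \<Longrightarrow> walk (j + int d) \<noteq> walk j"
proof -
  define returns where "returns d \<longleftrightarrow> 0 < d \<and> (\<exists>i. walk i \<noteq> None \<and> walk (i + int d) = walk i)" for d
  define p where "p = (LEAST d. returns d)"
  have "returns p" unfolding p_def by (rule LeastI[of _ d]) (use assms returns_def in blast)
  then obtain i0 a where a: "walk i0 = Some a" "walk (i0 + int p) = Some a" and "0 < p"
    unfolding returns_def by auto
  have least: "walk (j + int d) \<noteq> walk j" if "0 < d" "d < p" "walk j \<noteq> None" for j d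
    using not_less_Least[of d returns] that unfolding p_def returns_def by blast
  have "even p" "p \<noteq> 2" using walk_least_return_time[OF a \<open>0 < p\<close> least] by blast+
  then have "4 \<le> p" using \<open>0 < p\<close> by presburger
  show ?thesis using that[OF \<open>even p\<close> \<open>4 \<le> p\<close> walk_periodic[OF a \<open>even p\<close>] least] .
qed

lemma walk_cycle:
  assumes "walk i \<noteq> None" "walk (i + int d) = walk i" "0 < d"
  shows "alt_even_cycle M1 M2 walk_edge_set"
proof -
  obtain p where "even p" "4 \<le> p" and periodic: "\<And>m. walk (m + int p) = walk m"
    and least: "\<And>j d. 0 < d \<Longrightarrow> d < p \<Longrightarrow> walk j \<noteq> None \<Longrightarrow> walk (j + int d) \<noteq> walk j"
    using walk_least_return_periodic[OF assms] by blast
  then have "0 < p" by simp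
  have mod: "walk (m mod int p) = walk m" for m by (rule periodic_mod) (rule periodic)
  have "walk (int p) \<noteq> None" using periodic[of 0] by simp
  moreover have "0 \<le> m mod int p" "m mod int p \<le> int p" for m
    using \<open>0 < p\<close> by (simp_all add: order_less_imp_le)
  ultimately have "walk m \<noteq> None" for m
    using walk_defined_between[of 0 "int p" "m mod int p"] mod[of m] by simp
  then have defined: "\<And>k. walk (0 + int k) \<noteq> None" by simp
  define n where "n = p - 1"
  define xs where "xs = segment 0 n"
  have p: "p = Suc n" using \<open>0 < p\<close> unfolding n_def by simp
  have closed_once: "xs @ [xs ! 0] = segment 0 p"
    unfolding xs_def p segment_Suc using nth_segment[of 0 n 0] periodic[of 0] p by simp
  have "1 \<le> n" "walk (0 + int (Suc p)) = walk 1"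
    using \<open>4 \<le> p\<close> p periodic[of 1] by (simp_all add: add.commute)
  then have closed_twice: "xs @ [xs ! 0, xs ! 1] = segment 0 (Suc p)"
    using closed_once nth_segment[of 1 n 0] unfolding xs_def segment_Suc[of 0 p] by simp
  have "inj_on walk {0..int n}"
  proof (rule inj_onI)
    fix i j assume "i \<in> {0..int n}" "j \<in> {0..int n}" "walk i = walk j"
    moreover have "walk i \<noteq> walk j" if "0 \<le> i" "i < j" "j \<le> int n" for i j
    proof -
      have "nat (j - i) < p" using that p by linarith
      then show ?thesis using least[of "nat (j - i)" i] that \<open>walk i \<noteq> None\<close> by auto
    qed
    ultimately show "i = j" by (metis atLeastAtMost_iff linorder_neqE)
  qed
  then have "distinct xs" unfolding xs_def using defined by (intro distinct_segment) simp_all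
  have "walk_edges (segment 0 p) = walk_edge_set"
  proof -
    have "\<exists>j. 0 \<le> j \<and> j < int p \<and> walk j = Some a \<and> walk (j + 1) = Some b"
      if "walk i = Some a" "walk (i + 1) = Some b" for i a b
    proof (intro exI conjI)
      have "walk (i mod int p + 1) = walk ((i mod int p + 1) mod int p)" by (rule mod[symmetric])
      also have "\<dots> = walk (i + 1)" by (simp add: mod_add_left_eq mod)
      finally show "walk (i mod int p + 1) = Some b" using that(2) by simp
      show "walk (i mod int p) = Some a" using that(1) mod by simp
    qed (use \<open>0 < p\<close> in simp_all)
    then show ?thesis
      unfolding segment_edges[OF defined] walk_edge_set_def by (auto 0 3)
  qed
  then show ?thesis
    unfolding alt_even_cycle_def
    using \<open>distinct xs\<close> \<open>even p\<close> \<open>4 \<le> p\<close> closed_once closed_twice segment_alternating[OF defined]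
    by (intro exI[of _ xs]) (auto simp: xs_def p)
qed

lemma walk_double_ray:
  assumes total: "\<And>i. walk i \<noteq> None" and "inj walk"
  shows "alt_double_ray M1 M2 walk_edge_set"
proof -
  define f where "f i = the (walk i)" for i
  have walk_f: "walk i = Some (f i)" for i using total[of i] unfolding f_def by simp
  have "inj f" using \<open>inj walk\<close> walk_f by (metis injD injI)
  moreover have "walk_edge_set = range (\<lambda>i. {f i, f (i + 1)})"
    unfolding walk_edge_set_def using walk_f by auto
  moreover have "({f i, f (i + 1)} \<in> M1 \<longleftrightarrow> {f (i + 1), f (i + 2)} \<notin> M1) \<and>
      ({f i, f (i + 1)} \<in> M2 \<longleftrightarrow> {f (i + 1), f (i + 2)} \<notin> M2)" for i
  proof -
    have "({f j, f (j + 1)} \<in> M1 \<longleftrightarrow> even j) \<and> ({f j, f (j + 1)} \<in> M2 \<longleftrightarrow> odd j)" for j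
      using walk_edge_sides walk_f by blast
    from this[of i] this[of "i + 1"] show ?thesis by (simp add: add.assoc)
  qed
  ultimately show ?thesis
    unfolding alt_double_ray_def by blast
qed

lemma walk_even_path:
  assumes "lo < hi" and domain: "\<And>i. walk i \<noteq> None \<longleftrightarrow> lo \<le> i \<and> i \<le> hi"
    and "inj_on walk {lo..hi}" and "even (hi - lo)"
    and layer: "\<exists>n. the (walk lo) \<in> B n \<and> the (walk hi) \<in> B n \<and>
      (n = 0 \<or> the (walk lo) \<notin> B (n - 1) \<and> the (walk hi) \<notin> B (n - 1))"
  shows "alt_even_path_same_layer B M1 M2 walk_edge_set"
proof -
  define n where "n = nat (hi - lo)"
  have hi: "hi = lo + int n" using \<open>lo < hi\<close> unfolding n_def by simp
  have defined: "\<And>k. k \<le> n \<Longrightarrow> walk (lo + int k) \<noteq> None" using domain hi by simp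
  define xs where "xs = segment lo n"
  have "1 \<le> n" using \<open>lo < hi\<close> hi by simp
  have "distinct xs" unfolding xs_def using \<open>inj_on walk {lo..hi}\<close> hi by (intro distinct_segment defined) simp_all
  have "walk_edges xs =
    {{a, b} | a b. \<exists>i. lo \<le> i \<and> i < lo + int n \<and> walk i = Some a \<and> walk (i + 1) = Some b}"
    unfolding xs_def by (rule segment_edges[OF defined])
  also have "\<dots> = walk_edge_set"
  proof -
    have "lo \<le> i \<and> i < lo + int n" if "walk i \<noteq> None" "walk (i + 1) \<noteq> None" for i
      using that domain[of i] domain[of "i + 1"] hi by simp
    then show ?thesis unfolding walk_edge_set_def by fastforce
  qed
  finally have "walk_edges xs = walk_edge_set" .
  moreover have "hd xs = the (walk lo)" unfolding xs_def segment_def by (simp add: hd_map del: upt_Suc)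
  moreover have "last xs = the (walk hi)" unfolding xs_def segment_def hi by simp
  ultimately show ?thesis
    unfolding alt_even_path_same_layer_def
    using \<open>distinct xs\<close> \<open>1 \<le> n\<close> \<open>even (hi - lo)\<close> hi layer segment_alternating[OF defined]
    by (intro exI[of _ xs]) (auto simp: xs_def)
qed

lemma walk_ends_missed:
  assumes "walk i = Some a" "walk (i + 1) = None \<or> walk (i - 1) = None"
  shows "a \<in> missed_in M1 walk_verts \<union> missed_in M2 walk_verts"
proof -
  have "a \<in> walk_verts" using assms(1) unfolding walk_verts_def by blast
  moreover have "misses M1 a \<or> misses M2 a"
  proof -
    have "misses (if p then M1 else M2) a \<Longrightarrow> misses M1 a \<or> misses M2 a" for p
      by (cases p) simp_all
    then show ?thesis
      using assms(2) walk_upper_end_misses[OF assms(1)] walk_lower_end_misses[OF assms(1)] by blast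
  qed
  ultimately show ?thesis unfolding missed_in_def by blast
qed

lemma walk_single_end_unbalanced:
  assumes e: "walk e = Some u" "walk (e + 1) = None \<or> walk (e - 1) = None"
    and single: "\<And>i. walk i \<noteq> None \<Longrightarrow> walk (i + 1) = None \<or> walk (i - 1) = None \<Longrightarrow> i = e"
    and covered: "walk_verts \<subseteq> (\<Union>n. B n)"
  shows "\<exists>n. card (missed_in M1 walk_verts \<inter> B n) \<noteq> card (missed_in M2 walk_verts \<inter> B n)"
proof -
  have "missed_in M1 walk_verts \<union> missed_in M2 walk_verts = {u}"
  proof
    show "missed_in M1 walk_verts \<union> missed_in M2 walk_verts \<subseteq> {u}"
    proof
      fix v assume v: "v \<in> missed_in M1 walk_verts \<union> missed_in M2 walk_verts"
      then obtain i where i: "walk i = Some v" unfolding missed_in_def walk_verts_def by blast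
      then have "i = e" using single missed_at_end[OF v] by simp
      then show "v \<in> {u}" using i e(1) by simp
    qed
    show "{u} \<subseteq> missed_in M1 walk_verts \<union> missed_in M2 walk_verts"
      using walk_ends_missed[OF e] by simp
  qed
  moreover obtain n where "u \<in> B n" using covered e(1) unfolding walk_verts_def by blast
  ultimately show ?thesis using card_Int_singleton_unbalanced[OF missed_disjoint] by blast
qed

lemma walk_finite_path:
  assumes lo: "walk lo \<noteq> None" "walk (lo - 1) = None"
    and hi: "walk hi \<noteq> None" "walk (hi + 1) = None"
    and inj: "inj_on walk {i. walk i \<noteq> None}"
    and balanced: "\<And>n. card (missed_in M1 walk_verts \<inter> B n) = card (missed_in M2 walk_verts \<inter> B n)"
    and "mono B" and covered: "walk_verts \<subseteq> (\<Union>n. B n)"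
  shows "alt_even_path_same_layer B M1 M2 walk_edge_set"
proof -
  let ?A = "missed_in M1 walk_verts" and ?A' = "missed_in M2 walk_verts"
  have domain: "walk i \<noteq> None \<longleftrightarrow> lo \<le> i \<and> i \<le> hi" for i
    using walk_lower_end_min[OF lo] walk_upper_end_max[OF hi] walk_defined_between[OF lo(1) hi(1)]
    by blast
  have "lo < hi" using walk_starts domain[of 1] domain[of "- 1"] domain[of 0] by auto
  obtain u v where u: "walk lo = Some u" and v: "walk hi = Some v" using lo hi by auto
  have "u \<noteq> v" using inj_onD[OF inj, of lo hi] u v \<open>lo < hi\<close> by auto
  have ends: "?A \<union> ?A' = {u, v}"
  proof
    show "?A \<union> ?A' \<subseteq> {u, v}"
    proof
      fix w assume w: "w \<in> ?A \<union> ?A'"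
      then obtain i where i: "walk i = Some w" unfolding missed_in_def walk_verts_def by blast
      then have "i = lo \<or> i = hi"
        using missed_at_end[OF w i] domain[of i] domain[of "i + 1"] domain[of "i - 1"] by auto
      then show "w \<in> {u, v}" using i u v by auto
    qed
    show "{u, v} \<subseteq> ?A \<union> ?A'" using walk_ends_missed u v lo(2) hi(2) by blast
  qed
  obtain m1 m2 where "u \<in> B m1" "v \<in> B m2" using covered u v unfolding walk_verts_def by blast
  then have "u \<in> B (max m1 m2)" "v \<in> B (max m1 m2)"
    using monoD[OF \<open>mono B\<close>, of m1 "max m1 m2"] monoD[OF \<open>mono B\<close>, of m2 "max m1 m2"] by auto
  note pair = balanced_pair[where X = B, OF missed_disjoint ends \<open>u \<noteq> v\<close> balanced this]
  have "u \<in> walk_verts" "v \<in> walk_verts" using u v unfolding walk_verts_def by blast+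
  then have "u \<in> (if odd lo then ?A else ?A')" "v \<in> (if even hi then ?A else ?A')"
    using walk_lower_end_misses[OF u lo(2)] walk_upper_end_misses[OF v hi(2)]
    unfolding missed_in_def by (simp_all split: if_splits)
  then have "odd lo \<longleftrightarrow> odd hi" using pair(1) missed_disjoint by (auto split: if_splits)
  then have "even (hi - lo)" by simp
  have inj_path: "inj_on walk {lo..hi}" using inj domain by (auto intro: inj_on_subset)
  have layer: "\<exists>n. the (walk lo) \<in> B n \<and> the (walk hi) \<in> B n \<and>
      (n = 0 \<or> the (walk lo) \<notin> B (n - 1) \<and> the (walk hi) \<notin> B (n - 1))"
    using least_common_layer[of u B v, OF pair(2) \<open>u \<in> B (max m1 m2)\<close>] u v by simp
  show ?thesis by (rule walk_even_path[OF \<open>lo < hi\<close> domain inj_path \<open>even (hi - lo)\<close> layer])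
qed

lemma walk_no_return_shape:
  assumes inj: "inj_on walk {i. walk i \<noteq> None}"
    and balanced: "\<And>n. card (missed_in M1 walk_verts \<inter> B n) = card (missed_in M2 walk_verts \<inter> B n)"
    and "mono B" and covered: "walk_verts \<subseteq> (\<Union>n. B n)"
  shows "alt_double_ray M1 M2 walk_edge_set \<or> alt_even_path_same_layer B M1 M2 walk_edge_set"
proof (cases "\<exists>hi. walk hi \<noteq> None \<and> walk (hi + 1) = None";
       cases "\<exists>lo. walk lo \<noteq> None \<and> walk (lo - 1) = None")
  assume "\<exists>hi. walk hi \<noteq> None \<and> walk (hi + 1) = None" "\<exists>lo. walk lo \<noteq> None \<and> walk (lo - 1) = None"
  then obtain lo hi where ends: "walk lo \<noteq> None" "walk (lo - 1) = None" "walk hi \<noteq> None" "walk (hi + 1) = None"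
    by blast
  show ?thesis by (rule disjI2, rule walk_finite_path[OF ends inj balanced \<open>mono B\<close> covered])
next
  assume "\<exists>hi. walk hi \<noteq> None \<and> walk (hi + 1) = None"
    and no_lo: "\<nexists>lo. walk lo \<noteq> None \<and> walk (lo - 1) = None"
  then obtain hi u where hi: "walk hi = Some u" "walk (hi + 1) = None" by auto
  have "i = hi" if "walk i \<noteq> None" "walk (i + 1) = None \<or> walk (i - 1) = None" for i
  proof -
    have "walk (i + 1) = None" using that no_lo by blast
    then have "hi \<le> i" "i \<le> hi"
      using walk_upper_end_max[OF that(1)] walk_upper_end_max[of hi i] hi that(1) by simp_all
    then show ?thesis by simp
  qed
  then obtain n where "card (missed_in M1 walk_verts \<inter> B n) \<noteq> card (missed_in M2 walk_verts \<inter> B n)"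
    using walk_single_end_unbalanced[OF hi(1) disjI1[OF hi(2)] _ covered] by blast
  then show ?thesis using balanced by blast
next
  assume no_hi: "\<nexists>hi. walk hi \<noteq> None \<and> walk (hi + 1) = None"
    and "\<exists>lo. walk lo \<noteq> None \<and> walk (lo - 1) = None"
  then obtain lo u where lo: "walk lo = Some u" "walk (lo - 1) = None" by auto
  have "i = lo" if "walk i \<noteq> None" "walk (i + 1) = None \<or> walk (i - 1) = None" for i
  proof -
    have "walk (i - 1) = None" using that no_hi by blast
    then have "lo \<le> i" "i \<le> lo"
      using walk_lower_end_min[OF that(1)] walk_lower_end_min[of lo i] lo that(1) by simp_all
    then show ?thesis by simp
  qed
  then obtain n where "card (missed_in M1 walk_verts \<inter> B n) \<noteq> card (missed_in M2 walk_verts \<inter> B n)"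
    using walk_single_end_unbalanced[OF lo(1) disjI2[OF lo(2)] _ covered] by blast
  then show ?thesis using balanced by blast
next
  assume no_hi: "\<nexists>hi. walk hi \<noteq> None \<and> walk (hi + 1) = None"
    and no_lo: "\<nexists>lo. walk lo \<noteq> None \<and> walk (lo - 1) = None"
  have "walk i \<noteq> None \<Longrightarrow> walk (i + 1) \<noteq> None" "walk i \<noteq> None \<Longrightarrow> walk (i - 1) \<noteq> None" for i
    using no_hi[unfolded not_ex, rule_format, of i] no_lo[unfolded not_ex, rule_format, of i] by simp_all
  then have total: "walk i \<noteq> None" for i by (rule walk_total)
  then have "{i. walk i \<noteq> None} = UNIV" by blast
  then have "inj walk" using inj by simp
  then show ?thesis using walk_double_ray[OF total] by blast
qed

lemma walk_component_shape:
  assumes balanced: "\<And>n. card (missed_in M1 walk_verts \<inter> B n) = card (missed_in M2 walk_verts \<inter> B n)"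
    and "mono B" and covered: "walk_verts \<subseteq> (\<Union>n. B n)"
  shows "alt_even_cycle M1 M2 walk_edge_set \<or> alt_double_ray M1 M2 walk_edge_set \<or>
    alt_even_path_same_layer B M1 M2 walk_edge_set"
proof (cases "\<exists>i d. walk i \<noteq> None \<and> walk (i + int d) = walk i \<and> 0 < d")
  case True
  then obtain i d where "walk i \<noteq> None" "walk (i + int d) = walk i" "0 < d" by blast
  then show ?thesis using walk_cycle by simp
next
  case False
  have no_return: "walk i \<noteq> walk j" if "walk i \<noteq> None" "i < j" for i j
    using False[unfolded not_ex, rule_format, of i "nat (j - i)"] that by simp
  have "inj_on walk {i. walk i \<noteq> None}"
  proof (rule inj_onI)
    fix i j assume "i \<in> {i. walk i \<noteq> None}" "j \<in> {i. walk i \<noteq> None}" "walk i = walk j"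
    then show "i = j" using no_return[of i j] no_return[of j i] by (cases i j rule: linorder_cases) auto
  qed
  then show ?thesis using walk_no_return_shape[OF _ balanced \<open>mono B\<close> covered] by simp
qed

end

theorem lemmaA2:
  fixes V :: "'a set" and E :: "'a set set" and B :: "nat \<Rightarrow> 'a set"
    and M1 M2 :: "'a set set"
  assumes "simple_graph V E"
    and "induced_connected E V"
    and "countable V" and "infinite V"
    and "dagger V E B"
    and "maximum_matching E B M1" and "maximum_matching E B M2"
  shows "\<forall>C \<in> edge_components (M1 \<oplus> M2).
           alt_even_cycle M1 M2 C \<or> alt_double_ray M1 M2 C \<or>
           alt_even_path_same_layer B M1 M2 C"
proof
  fix C assume C: "C \<in> edge_components (M1 \<oplus> M2)"
  then obtain x where x: "x \<in> \<Union>(M1 \<oplus> M2)"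
    and C_eq: "C = {e \<in> M1 \<oplus> M2. \<exists>y\<in>e. (\<lambda>a b. {a, b} \<in> M1 \<oplus> M2)\<^sup>*\<^sup>* x y}"
    unfolding edge_components_def by blast
  have m1: "matching E M1" and m2: "matching E M2"
    using assms(6,7) unfolding maximum_matching_def by auto
  interpret alternating_component V E M1 M2 x using assms(1) m1 m2 x by unfold_locales
  have C_walk: "C = walk_edge_set" using C_eq component_eq_walk_edge_set by simp
  have fin: "finite (B n)" and B_Suc: "B n \<subseteq> B (Suc n)" for n
    using assms(5) unfolding dagger_def by auto
  have B_cover: "(\<Union>n. B n) = V" using assms(5) unfolding dagger_def by auto
  have "mono B" by (simp add: mono_iff_le_Suc B_Suc)
  have "component_closed (M1 \<oplus> M2) C"
    using edge_component_closed[OF assms(1) matching_sym_diff_subset[OF m1 m2] C] .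
  then have "card (missed_in M1 (\<Union>C) \<inter> B n) = card (missed_in M2 (\<Union>C) \<inter> B n)" for n
    by (rule maximum_matchings_balanced[OF assms(6,7) fin])
  then have balanced: "card (missed_in M1 walk_verts \<inter> B n) = card (missed_in M2 walk_verts \<inter> B n)" for n
    using C_walk Union_walk_edge_set by simp
  have "walk_verts = \<Union>walk_edge_set" by (simp add: Union_walk_edge_set)
  also have "\<dots> \<subseteq> \<Union>E"
    using walk_edge_set_subset matching_sym_diff_subset[OF m1 m2] by (intro Union_mono) simp
  also have "\<dots> \<subseteq> (\<Union>n. B n)" using simple_graph_Union_subset[OF assms(1)] B_cover by simp
  finally have covered: "walk_verts \<subseteq> (\<Union>n. B n)" .
  show "alt_even_cycle M1 M2 C \<or> alt_double_ray M1 M2 C \<or> alt_even_path_same_layer B M1 M2 C"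
    using walk_component_shape[OF balanced \<open>mono B\<close> covered] C_walk by simp
qed

end
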